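(* There is no incompressible Følner sequence in the group $\mathbb Z^\infty=\bigoplus_{n=1}^\infty\mathbb Z$.
   Context: A sequence of translates $\{W_{n(i)}+f_i\}_{i=1}^I$ is incremental if $n(1)\ge\dots\ge n(I)$ and $f_i\notin\bigcup_{j<i}(W_{n(j)}+f_j)$. An increasing sequence $\{W_n\}$ of finite sets containing $0$ is incompressible if there is a constant $C$ such that for every incremental sequence at most $C$ of the sets $W_{n(i)}+f_i$ contain $0$. Følner: $|W_n\triangle(g+W_n)|/|W_n|\to0$ for every $g$. *)

theory Defs
  imports "HOL-Analysis.Analysis" "HOL-Library.Poly_Mapping"
begin

text \<open>The group Z-infinity (direct sum of countably many copies of Z) is the type of
  finitely supported functions from nat to int (Poly_Mapping), with pointwise addition.\<close>

type_synonym zinf = "nat \<Rightarrow>\<^sub>0 int"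

definition translate :: "'a::ab_group_add set \<Rightarrow> 'a \<Rightarrow> 'a set" where
  "translate W f = (\<lambda>w. w + f) ` W"

definition incremental :: "(nat \<Rightarrow> 'a::ab_group_add set) \<Rightarrow> (nat \<times> 'a) list \<Rightarrow> bool" where
  "incremental W xs \<longleftrightarrow>
     sorted_wrt (\<lambda>p q. fst p \<ge> fst q) xs \<and>
     (\<forall>i < length xs. snd (xs ! i) \<notin>
        (\<Union>j < i. translate (W (fst (xs ! j))) (snd (xs ! j))))"

definition count_zero :: "(nat \<Rightarrow> 'a::ab_group_add set) \<Rightarrow> (nat \<times> 'a) list \<Rightarrow> nat" where
  "count_zero W xs = card {i. i < length xs \<and> 0 \<in> translate (W (fst (xs ! i))) (snd (xs ! i))}"

definition incompressible :: "(nat \<Rightarrow> 'a::ab_group_add set) \<Rightarrow> bool" where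
  "incompressible W \<longleftrightarrow>
     (\<forall>n. finite (W n) \<and> 0 \<in> W n) \<and> (\<forall>n. W n \<subseteq> W (Suc n)) \<and>
     (\<exists>C::nat. \<forall>xs. incremental W xs \<longrightarrow> count_zero W xs \<le> C)"

definition folner :: "(nat \<Rightarrow> 'a::ab_group_add set) \<Rightarrow> bool" where
  "folner W \<longleftrightarrow>
     (\<forall>g. (\<lambda>n. real (card ((W n - (\<lambda>w. g + w) ` W n) \<union> ((\<lambda>w. g + w) ` W n - W n)))
               / real (card (W n))) \<longlonglongrightarrow> 0)"

end

theory Submission
  imports Defs
begin

text \<open>We build incremental sequences of any length whose
  translates all contain 0, keeping the translation vectors in the negative half space of an
  additive functional \<phi>. To append a translate, pick a coordinate D on which no earlier vector
  lives; by the Folner property some W N with large N has an element with nonzero D-coordinate.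
  Among the elements of W N with that D-coordinate take a \<phi>-minimal u and append W N - u. An
  earlier vector f = w - u with w \<in> W N would give w(D) = u(D) and \<phi> w = \<phi> f + \<phi> u < \<phi> u, against
  minimality. Adding a large multiple of the D-coordinate to \<phi> makes -u negative too, without
  changing \<phi> on the earlier vectors.\<close>

lemma incremental_Cons:
  "incremental W ((n, f) # xs) \<longleftrightarrow>
     incremental W xs \<and> (\<forall>p\<in>set xs. fst p \<le> n) \<and> (\<forall>p\<in>set xs. snd p \<notin> translate (W n) f)"
proof -
  let ?T = "\<lambda>ys j. translate (W (fst (ys ! j))) (snd (ys ! j))"
  have "(\<forall>i < Suc (length xs). snd (((n, f) # xs) ! i) \<notin> (\<Union>j<i. ?T ((n, f) # xs) j)) \<longleftrightarrow>
        (\<forall>p\<in>set xs. snd p \<notin> translate (W n) f) \<and> (\<forall>i < length xs. snd (xs ! i) \<notin> (\<Union>j<i. ?T xs j))"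
    by (auto simp: All_less_Suc2 lessThan_Suc_eq_insert_0 all_set_conv_all_nth)
  then show ?thesis
    unfolding incremental_def by auto
qed

lemma count_zero_eq_length:
  assumes "\<forall>p\<in>set xs. 0 \<in> translate (W (fst p)) (snd p)"
  shows "count_zero W xs = length xs"
proof -
  have "{i. i < length xs \<and> 0 \<in> translate (W (fst (xs ! i))) (snd (xs ! i))} = {..<length xs}"
    using assms by auto
  then show ?thesis
    by (simp add: count_zero_def)
qed

lemma translate_fibre_minimizer_avoids:
  fixes \<phi> :: "'a::ab_group_add \<Rightarrow> 'b::ordered_ab_group_add" and \<kappa> :: "'a \<Rightarrow> 'c::ab_group_add"
  assumes "Modules.additive \<phi>" and "Modules.additive \<kappa>" and "u \<in> B"
    and min: "\<And>w. w \<in> B \<Longrightarrow> \<kappa> w = \<kappa> u \<Longrightarrow> \<phi> u \<le> \<phi> w"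
    and "\<kappa> f = 0" and "\<phi> f < 0"
  shows "f \<notin> translate B (- u)"
proof
  assume "f \<in> translate B (- u)"
  then obtain w where "w \<in> B" and w: "w = f + u"
    by (auto simp: translate_def)
  then have "\<kappa> w = \<kappa> u"
    using assms(2,5) by (simp add: Modules.additive.add)
  with \<open>w \<in> B\<close> have "\<phi> u \<le> \<phi> w"
    by (rule min)
  also have "\<phi> w = \<phi> f + \<phi> u"
    using assms(1) w by (simp add: Modules.additive.add)
  finally have "\<phi> u \<le> \<phi> f + \<phi> u" .
  with \<open>\<phi> f < 0\<close> show False
    by simp
qed

lemma folner_eventually_translate_meets:
  fixes W :: "nat \<Rightarrow> 'a::ab_group_add set"
  assumes "folner W" and "\<And>n. finite (W n)" and "\<And>n. W n \<noteq> {}"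
  shows "\<forall>\<^sub>F n in sequentially. W n \<inter> (\<lambda>w. g + w) ` W n \<noteq> {}"
proof -
  let ?ratio = "\<lambda>n. real (card ((W n - (\<lambda>w. g + w) ` W n) \<union> ((\<lambda>w. g + w) ` W n - W n)))
    / real (card (W n))"
  have "\<forall>\<^sub>F n in sequentially. ?ratio n < 1"
    using assms(1) by (auto simp: folner_def intro: order_tendstoD(2))
  moreover have "W n \<inter> (\<lambda>w. g + w) ` W n \<noteq> {}" if "?ratio n < 1" for n
  proof
    assume "W n \<inter> (\<lambda>w. g + w) ` W n = {}"
    then have "card (W n) \<le> card ((W n - (\<lambda>w. g + w) ` W n) \<union> ((\<lambda>w. g + w) ` W n - W n))"
      using assms(2) by (intro card_mono) auto
    moreover have "card (W n) > 0"
      using assms(2,3) by (simp add: card_gt_0_iff)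
    ultimately show False
      using that by simp
  qed
  ultimately show ?thesis
    by (rule eventually_mono)
qed

lemma folner_eventually_coordinate_nonzero:
  fixes W :: "nat \<Rightarrow> zinf set" and k :: nat
  assumes "folner W" and "\<And>n. finite (W n)" and "\<And>n. W n \<noteq> {}"
  shows "\<forall>\<^sub>F n in sequentially. \<exists>w\<in>W n. poly_mapping.lookup w k \<noteq> 0"
  using folner_eventually_translate_meets[OF assms, of "Poly_Mapping.single k (1::int)"]
proof (rule eventually_mono)
  fix n
  assume "W n \<inter> (\<lambda>w. Poly_Mapping.single k 1 + w) ` W n \<noteq> {}"
  then obtain w where w: "w \<in> W n" and gw: "Poly_Mapping.single k 1 + w \<in> W n"
    by blast
  show "\<exists>w\<in>W n. poly_mapping.lookup w k \<noteq> 0"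
  proof (cases "poly_mapping.lookup w k = 0")
    case True
    then have "poly_mapping.lookup (Poly_Mapping.single k 1 + w) k \<noteq> 0"
      by (simp add: lookup_add)
    with gw show ?thesis ..
  qed (use w in blast)
qed

lemma additive_lookup: "Modules.additive (\<lambda>x. poly_mapping.lookup x k)"
  by (rule Modules.additive.intro) (simp add: lookup_add)

lemma incremental_extend:
  fixes W :: "nat \<Rightarrow> zinf set" and \<phi> :: "zinf \<Rightarrow> int"
  assumes fin: "\<And>n. finite (W n)"
    and nonzero: "\<And>k. \<forall>\<^sub>F n in sequentially. \<exists>w\<in>W n. poly_mapping.lookup w k \<noteq> 0"
    and "incremental W xs" and "Modules.additive \<phi>" and neg: "\<forall>p\<in>set xs. \<phi> (snd p) < 0"
  obtains N u and \<psi> :: "zinf \<Rightarrow> int" where "u \<in> W N" and "incremental W ((N, - u) # xs)"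
    and "Modules.additive \<psi>" and "\<forall>p\<in>set ((N, - u) # xs). \<psi> (snd p) < 0"
proof -
  have "finite (\<Union>p\<in>set xs. Poly_Mapping.keys (snd p))"
    by simp
  then obtain D where "D \<notin> (\<Union>p\<in>set xs. Poly_Mapping.keys (snd p))"
    using ex_new_if_finite[OF infinite_UNIV_nat] by blast
  then have old_D: "poly_mapping.lookup (snd p) D = 0" if "p \<in> set xs" for p
    using that by (auto simp: in_keys_iff)
  have "\<forall>\<^sub>F n in sequentially. \<forall>p\<in>set xs. fst p \<le> n"
    by (intro eventually_ball_finite) (auto intro: eventually_ge_at_top)
  then have "\<forall>\<^sub>F n in sequentially. (\<forall>p\<in>set xs. fst p \<le> n) \<and> (\<exists>w\<in>W n. poly_mapping.lookup w D \<noteq> 0)"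
    using nonzero[of D] by (rule eventually_conj)
  then obtain N w1 where N: "\<forall>p\<in>set xs. fst p \<le> N" and "w1 \<in> W N" and w1: "poly_mapping.lookup w1 D \<noteq> 0"
    by (auto simp: eventually_sequentially)
  define B where "B = {w \<in> W N. poly_mapping.lookup w D = poly_mapping.lookup w1 D}"
  have "finite B" and "w1 \<in> B"
    using fin \<open>w1 \<in> W N\<close> by (auto simp: B_def)
  then obtain u where "u \<in> B" and u_min: "\<And>w. w \<in> B \<Longrightarrow> \<phi> u \<le> \<phi> w"
    using ex_is_arg_min_if_finite[of B \<phi>] by (auto simp: is_arg_min_linorder)
  then have "u \<in> W N" and uD: "poly_mapping.lookup u D = poly_mapping.lookup w1 D"
    by (auto simp: B_def)
  have avoid: "\<forall>p\<in>set xs. snd p \<notin> translate (W N) (- u)"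
  proof
    fix p assume "p \<in> set xs"
    show "snd p \<notin> translate (W N) (- u)"
      by (rule translate_fibre_minimizer_avoids[OF \<open>Modules.additive \<phi>\<close> additive_lookup[of D] \<open>u \<in> W N\<close>])
        (use u_min uD old_D neg \<open>p \<in> set xs\<close> in \<open>auto simp: B_def\<close>)
  qed
  define c where "c = (\<bar>\<phi> u\<bar> + 1) * poly_mapping.lookup u D"
  define \<psi> where "\<psi> x = \<phi> x + c * poly_mapping.lookup x D" for x
  have "Modules.additive \<psi>"
    using \<open>Modules.additive \<phi>\<close>
    by (simp add: \<psi>_def Modules.additive_def lookup_add algebra_simps)
  have "\<psi> (- u) = - \<phi> u - (\<bar>\<phi> u\<bar> + 1) * (poly_mapping.lookup u D)\<^sup>2"
    using \<open>Modules.additive \<phi>\<close>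
    by (simp add: \<psi>_def c_def Modules.additive.minus power2_eq_square)
  moreover have "1 \<le> (poly_mapping.lookup u D)\<^sup>2"
    using w1 uD by (simp add: int_one_le_iff_zero_less)
  then have "\<bar>\<phi> u\<bar> + 1 \<le> (\<bar>\<phi> u\<bar> + 1) * (poly_mapping.lookup u D)\<^sup>2"
    using mult_left_mono[of 1 _ "\<bar>\<phi> u\<bar> + 1"] by simp
  ultimately have "\<psi> (- u) < 0"
    using abs_ge_minus_self[of "\<phi> u"] by linarith
  moreover have "\<psi> (snd p) = \<phi> (snd p)" if "p \<in> set xs" for p
    using old_D[OF that] by (simp add: \<psi>_def)
  ultimately have "\<forall>p\<in>set ((N, - u) # xs). \<psi> (snd p) < 0"
    using neg by auto
  moreover have "incremental W ((N, - u) # xs)"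
    using \<open>incremental W xs\<close> N avoid by (simp add: incremental_Cons)
  ultimately show thesis
    using that \<open>u \<in> W N\<close> \<open>Modules.additive \<psi>\<close> by blast
qed

lemma folner_long_incremental_sequence:
  fixes W :: "nat \<Rightarrow> zinf set"
  assumes "folner W" and fin: "\<And>n. finite (W n)" and "\<And>n. W n \<noteq> {}"
  shows "\<exists>xs. length xs = m \<and> incremental W xs \<and> (\<forall>p\<in>set xs. 0 \<in> translate (W (fst p)) (snd p))"
proof -
  have nonzero: "\<And>k. \<forall>\<^sub>F n in sequentially. \<exists>w\<in>W n. poly_mapping.lookup w k \<noteq> 0"
    using folner_eventually_coordinate_nonzero[OF assms] .
  have "\<exists>xs \<phi>. length xs = m \<and> incremental W xs \<and> (\<forall>p\<in>set xs. 0 \<in> translate (W (fst p)) (snd p))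
    \<and> Modules.additive (\<phi> :: zinf \<Rightarrow> int) \<and> (\<forall>p\<in>set xs. \<phi> (snd p) < 0)"
  proof (induction m)
    case 0
    have "Modules.additive (\<lambda>_ :: zinf. 0 :: int)"
      by (simp add: Modules.additive_def)
    then show ?case
      by (auto simp: incremental_def)
  next
    case (Suc m)
    then obtain xs and \<phi> :: "zinf \<Rightarrow> int" where "length xs = m" and incr: "incremental W xs"
      and zero: "\<forall>p\<in>set xs. 0 \<in> translate (W (fst p)) (snd p)"
      and add: "Modules.additive \<phi>" and neg: "\<forall>p\<in>set xs. \<phi> (snd p) < 0"
      by blast
    obtain N u and \<psi> :: "zinf \<Rightarrow> int" where "u \<in> W N" and "incremental W ((N, - u) # xs)"
      and "Modules.additive \<psi>" and "\<forall>p\<in>set ((N, - u) # xs). \<psi> (snd p) < 0"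
      by (rule incremental_extend[OF fin nonzero incr add neg])
    moreover have "0 \<in> translate (W N) (- u)"
      using \<open>u \<in> W N\<close> by (force simp: translate_def)
    ultimately show ?case
      using \<open>length xs = m\<close> zero by (intro exI[of _ "(N, - u) # xs"] exI[of _ \<psi>]) auto
  qed
  then show ?thesis
    by blast
qed

theorem corollary2p8:
  "\<not> (\<exists>W :: nat \<Rightarrow> zinf set. incompressible W \<and> folner W)"
proof
  assume "\<exists>W :: nat \<Rightarrow> zinf set. incompressible W \<and> folner W"
  then obtain W :: "nat \<Rightarrow> zinf set" and C where "folner W" and fin: "\<And>n. finite (W n)"
    and zero: "\<And>n. 0 \<in> W n" and bound: "\<And>xs. incremental W xs \<Longrightarrow> count_zero W xs \<le> C"
    by (auto simp: incompressible_def)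
  obtain xs where "length xs = Suc C" and "incremental W xs"
    and "\<forall>p\<in>set xs. 0 \<in> translate (W (fst p)) (snd p)"
    using folner_long_incremental_sequence[OF \<open>folner W\<close> fin] zero by blast
  then have "count_zero W xs = Suc C"
    by (simp add: count_zero_eq_length)
  with bound[OF \<open>incremental W xs\<close>] show False
    by simp
qed

end
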